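(* Let $I\subset\mathbb{Z}$ be an interval and let $\vec r,\vec{\bar r}:I\to\mathbb{R}^3$ be two discrete centroaffine space curves. Then there exists $A\in GL(3,\mathbb{R})$ with $\vec r(k)=A\,\vec{\bar r}(k)$ for all $k\in I$ if and only if the two curves have the same first and second centroaffine curvatures and the same centroaffine torsions at all corresponding points where these are defined.
   Context: A discrete centroaffine space curve is a map $\vec r:I\to\mathbb{R}^3$ ($I\subset\mathbb{Z}$ an interval containing at least three consecutive integers) with $[\vec r_{k-1},\vec r_k,\vec r_{k+1}]\ne0$ whenever $k-1,k,k+1\in I$, where $\vec r_k=\vec r(k)$, $[\cdot,\cdot,\cdot]$ is the $3\times3$ determinant and $\vec t_k=\vec r_{k+1}-\vec r_k$. With $D_k=[\vec r_{k-1},\vec r_k,\vec r_{k+1}]$ $(=[\vec r_k,\vec t_{k-1},\vec t_k])$, the first and second centroaffine curvatures and the centroaffine torsion at $k$ (for $k-1,\dots,k+2\in I$) are $\kappa_k=\frac{[\vec r_k,\vec r_{k+1},\vec r_{k+2}]}{D_k}$, $\bar\kappa_k=\frac{[\vec r_{k+1},\vec t_{k-1},\vec t_{k+1}]}{D_k}$, $\tau_k=\frac{[\vec t_{k-1},\vec t_k,\vec t_{k+1}]}{D_k}$. *)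

theory Defs
  imports "HOL-Analysis.Analysis"
begin

definition det3 :: "real^3 \<Rightarrow> real^3 \<Rightarrow> real^3 \<Rightarrow> real" where
  "det3 a b c = det (vector [a, b, c] :: real^3^3)"

definition int_interval :: "int set \<Rightarrow> bool" where
  "int_interval I \<longleftrightarrow> (\<forall>a b c. a \<in> I \<longrightarrow> c \<in> I \<longrightarrow> a \<le> b \<longrightarrow> b \<le> c \<longrightarrow> b \<in> I)"

definition tvec :: "(int \<Rightarrow> real^3) \<Rightarrow> int \<Rightarrow> real^3" where
  "tvec r k = r (k + 1) - r k"

definition Dval :: "(int \<Rightarrow> real^3) \<Rightarrow> int \<Rightarrow> real" where
  "Dval r k = det3 (r (k - 1)) (r k) (r (k + 1))"

definition discrete_centroaffine_curve :: "int set \<Rightarrow> (int \<Rightarrow> real^3) \<Rightarrow> bool" where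
  "discrete_centroaffine_curve I r \<longleftrightarrow>
     int_interval I \<and> (\<exists>k. k - 1 \<in> I \<and> k \<in> I \<and> k + 1 \<in> I) \<and>
     (\<forall>k. k - 1 \<in> I \<and> k \<in> I \<and> k + 1 \<in> I \<longrightarrow> Dval r k \<noteq> 0)"

definition ca_kappa :: "(int \<Rightarrow> real^3) \<Rightarrow> int \<Rightarrow> real" where
  "ca_kappa r k = det3 (r k) (r (k + 1)) (r (k + 2)) / Dval r k"

definition ca_kappa_bar :: "(int \<Rightarrow> real^3) \<Rightarrow> int \<Rightarrow> real" where
  "ca_kappa_bar r k = det3 (r (k + 1)) (tvec r (k - 1)) (tvec r (k + 1)) / Dval r k"

definition ca_torsion :: "(int \<Rightarrow> real^3) \<Rightarrow> int \<Rightarrow> real" where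
  "ca_torsion r k = det3 (tvec r (k - 1)) (tvec r k) (tvec r (k + 1)) / Dval r k"

end

theory Submission
  imports Defs
begin

text \<open>Three consecutive points \<open>r(k-1), r(k), r(k+1)\<close> of a discrete centroaffine curve form
  a basis of \<open>\<real>\<^sup>3\<close>, and expanding \<open>r(k+2)\<close> in it gives the recurrence
  \<open>r(k+2) = \<kappa> r(k-1) - (\<kappa> + \<kappa>') r(k) + (1 + \<kappa>' + \<tau>) r(k+1)\<close> whose coefficients are the
  invariants at \<open>k\<close> (\<open>\<kappa>'\<close> the second curvature). The invariants are ratios of determinants,
  hence unchanged by \<open>GL(3,\<real>)\<close>. Conversely, if two curves share their invariants, the matrix
  mapping one initial frame to the other propagates along the common recurrence in both
  directions; going backwards uses \<open>\<kappa>(k) = D(k+1) / D(k) \<noteq> 0\<close>.\<close>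

lemma det3_expand:
  "det3 a b c =
     a$1 * b$2 * c$3 + a$2 * b$3 * c$1 + a$3 * b$1 * c$2
   - a$1 * b$3 * c$2 - a$2 * b$1 * c$3 - a$3 * b$2 * c$1"
  unfolding det3_def det_3 by simp

lemma ca_kappa_eq_Dval_ratio: "ca_kappa r k = Dval r (k + 1) / Dval r k"
  unfolding ca_kappa_def Dval_def by (simp add: add.assoc)

text \<open>Cramer's rule for \<open>z\<close> in the basis \<open>u, v, w\<close>, with the coordinates rewritten
  through differences so that they become the numerators of \<open>\<kappa>\<close>, \<open>\<kappa>'\<close> and \<open>\<tau>\<close>.\<close>

lemma cramer3_difference_form:
  "det3 u v w *\<^sub>R z = det3 v w z *\<^sub>R u - (det3 v w z + det3 w (v - u) (z - w)) *\<^sub>R v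
     + (det3 u v w + det3 w (v - u) (z - w) + det3 (v - u) (w - v) (z - w)) *\<^sub>R w"
  unfolding vec_eq_iff forall_3 det3_expand by (simp add: algebra_simps)

lemma ca_recurrence:
  assumes "Dval r k \<noteq> 0"
  shows "r (k + 2) = ca_kappa r k *\<^sub>R r (k - 1) - (ca_kappa r k + ca_kappa_bar r k) *\<^sub>R r k
           + (1 + ca_kappa_bar r k + ca_torsion r k) *\<^sub>R r (k + 1)"
    (is "_ = ?rhs")
proof -
  let ?D = "Dval r k"
  have tvec: "tvec r (k - 1) = r k - r (k - 1)" "tvec r (k + 1) = r (k + 2) - r (k + 1)"
    "tvec r k = r (k + 1) - r k"
    by (simp_all add: tvec_def add.assoc)
  have "?D *\<^sub>R r (k + 2) = (?D * ca_kappa r k) *\<^sub>R r (k - 1)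
    - (?D * (ca_kappa r k + ca_kappa_bar r k)) *\<^sub>R r k
    + (?D * (1 + ca_kappa_bar r k + ca_torsion r k)) *\<^sub>R r (k + 1)"
    using cramer3_difference_form[of "r (k - 1)" "r k" "r (k + 1)" "r (k + 2)"] assms
    unfolding ca_kappa_def ca_kappa_bar_def ca_torsion_def tvec
    by (simp add: Dval_def distrib_left add_divide_distrib)
  then have "?D *\<^sub>R r (k + 2) = ?D *\<^sub>R ?rhs"
    by (simp add: scaleR_add_right scaleR_diff_right)
  then show ?thesis
    using assms by simp
qed

lemma det3_matrix_vector_mult:
  "det3 (A *v a) (A *v b) (A *v c) = det A * det3 a b c"
  unfolding det3_expand det_3 by (simp add: matrix_vector_mult_def sum_3 algebra_simps)

lemma ca_invariants_matrix_image:
  fixes A :: "real^3^3"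
  assumes "det A \<noteq> 0"
    and "r (k - 1) = A *v rb (k - 1)" "r k = A *v rb k" "r (k + 1) = A *v rb (k + 1)"
      "r (k + 2) = A *v rb (k + 2)"
  shows "ca_kappa r k = ca_kappa rb k \<and> ca_kappa_bar r k = ca_kappa_bar rb k \<and>
    ca_torsion r k = ca_torsion rb k"
proof -
  have shifts: "k - 1 + 1 = k" "k + 1 + 1 = k + 2"
    by simp_all
  show ?thesis
    using assms(1)
    unfolding ca_kappa_def ca_kappa_bar_def ca_torsion_def Dval_def tvec_def shifts assms(2-5)
      matrix_vector_mult_diff_distrib[symmetric] det3_matrix_vector_mult
    by simp
qed

lemma matrix_image_extends_along_recurrence:
  fixes A :: "real^3^3"
  assumes "Dval r k \<noteq> 0" "Dval r (k + 1) \<noteq> 0" "Dval rb k \<noteq> 0"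
    and "ca_kappa r k = ca_kappa rb k" "ca_kappa_bar r k = ca_kappa_bar rb k"
      "ca_torsion r k = ca_torsion rb k"
    and "r k = A *v rb k" "r (k + 1) = A *v rb (k + 1)"
  shows "r (k - 1) = A *v rb (k - 1) \<longleftrightarrow> r (k + 2) = A *v rb (k + 2)"
proof -
  have "ca_kappa r k \<noteq> 0"
    using assms(1,2) by (simp add: ca_kappa_eq_Dval_ratio)
  have "r (k + 2) - A *v rb (k + 2) = ca_kappa r k *\<^sub>R (r (k - 1) - A *v rb (k - 1))"
    unfolding ca_recurrence[OF assms(1)] ca_recurrence[OF assms(3)]
    unfolding assms(4-8)
    by (simp add: matrix_vector_mult_scaleR matrix_vector_right_distrib
        matrix_vector_mult_diff_distrib algebra_simps)
  with \<open>ca_kappa r k \<noteq> 0\<close> show ?thesis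
    by (metis eq_iff_diff_eq_0 scaleR_eq_0_iff)
qed

lemma exists_invertible_matrix_mapping_frame:
  fixes u v w u' v' w' :: "real^3"
  assumes "det3 u v w \<noteq> 0" "det3 u' v' w' \<noteq> 0"
  obtains A :: "real^3^3" where "invertible A" "u' = A *v u" "v' = A *v v" "w' = A *v w"
proof -
  define F F' :: "real^3^3"
    where "F = transpose (vector [u, v, w])" and "F' = transpose (vector [u', v', w'])"
  have "det F \<noteq> 0" "det F' \<noteq> 0"
    using assms by (simp_all add: F_def F'_def det_transpose det3_def)
  then obtain G where "G ** F = mat 1"
    using invertible_det_nz invertible_left_inverse by blast
  define A where "A = F' ** G"
  have AF: "A ** F = F'"
    using \<open>G ** F = mat 1\<close> by (simp add: A_def matrix_mul_assoc[symmetric])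
  then have "det A \<noteq> 0"
    using \<open>det F' \<noteq> 0\<close> by (metis det_mul mult_zero_left)
  have columns: "F' *v axis i 1 = A *v (F *v axis i 1)" for i
    using AF by (simp add: matrix_vector_mul_assoc)
  have "u' = A *v u" "v' = A *v v" "w' = A *v w"
    using columns[of 1] columns[of 2] columns[of 3]
    by (simp_all add: matrix_vector_mult_basis F_def F'_def row_def vec_eq_iff)
  with \<open>det A \<noteq> 0\<close> show ?thesis
    using that invertible_det_nz by blast
qed

lemma int_intervalD: "int_interval I \<Longrightarrow> a \<in> I \<Longrightarrow> c \<in> I \<Longrightarrow> a \<le> b \<Longrightarrow> b \<le> c \<Longrightarrow> b \<in> I"
  unfolding int_interval_def by blast

lemma int_interval_three_term_induct:
  assumes I: "int_interval I" and k0: "k0 - 1 \<in> I" "k0 + 1 \<in> I"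
    and init: "P (k0 - 1)" "P k0" "P (k0 + 1)"
    and shift: "\<And>k. k - 1 \<in> I \<Longrightarrow> k + 2 \<in> I \<Longrightarrow> P k \<Longrightarrow> P (k + 1) \<Longrightarrow> P (k - 1) \<longleftrightarrow> P (k + 2)"
    and "k \<in> I"
  shows "P k"
proof -
  have forward: "j \<in> I \<longrightarrow> P (j - 2) \<and> P (j - 1) \<and> P j" if "k0 + 1 \<le> j" for j
    using that
  proof (induction j rule: int_ge_induct)
    case base
    show ?case using init by simp
  next
    case (step j)
    show ?case
    proof
      assume "j + 1 \<in> I"
      then have "j \<in> I" "j - 2 \<in> I"
        using step.hyps by (auto intro: int_intervalD[OF I k0(1)])
      with step.IH have "P (j - 2)" "P (j - 1)" "P j"
        by auto
      moreover have "j - 1 - 1 = j - 2" "j - 1 + 1 = j" "j - 1 + 2 = j + 1"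
        by simp_all
      ultimately have "P (j + 1)"
        using shift[of "j - 1"] \<open>j + 1 \<in> I\<close> \<open>j - 2 \<in> I\<close> by metis
      with \<open>P (j - 1)\<close> \<open>P j\<close> show "P (j + 1 - 2) \<and> P (j + 1 - 1) \<and> P (j + 1)"
        by (simp add: algebra_simps)
    qed
  qed
  have backward: "j \<in> I \<longrightarrow> P j \<and> P (j + 1) \<and> P (j + 2)" if "j \<le> k0 - 1" for j
    using that
  proof (induction j rule: int_le_induct)
    case base
    show ?case using init by (simp add: algebra_simps)
  next
    case (step j)
    show ?case
    proof
      assume "j - 1 \<in> I"
      then have "j \<in> I" "j + 2 \<in> I"
        using step.hyps by (auto intro: int_intervalD[OF I _ k0(2)])
      with step.IH have "P j" "P (j + 1)" "P (j + 2)"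
        by auto
      moreover have "P (j - 1)"
        using shift[of j] \<open>j - 1 \<in> I\<close> \<open>j + 2 \<in> I\<close> calculation by blast
      ultimately show "P (j - 1) \<and> P (j - 1 + 1) \<and> P (j - 1 + 2)"
        by (simp add: algebra_simps)
    qed
  qed
  consider "k0 + 1 \<le> k" | "k \<le> k0 - 1" | "k = k0"
    by linarith
  then show ?thesis
    using forward[of k] backward[of k] \<open>k \<in> I\<close> init by cases auto
qed

theorem proposition4p3:
  fixes I :: "int set" and r rb :: "int \<Rightarrow> real^3"
  assumes "discrete_centroaffine_curve I r" and "discrete_centroaffine_curve I rb"
  shows "(\<exists>A :: real^3^3. invertible A \<and> (\<forall>k\<in>I. r k = A *v rb k)) \<longleftrightarrow>
         (\<forall>k. k - 1 \<in> I \<and> k \<in> I \<and> k + 1 \<in> I \<and> k + 2 \<in> I \<longrightarrow>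
              ca_kappa r k = ca_kappa rb k \<and> ca_kappa_bar r k = ca_kappa_bar rb k \<and>
              ca_torsion r k = ca_torsion rb k)"
    (is "?congruent \<longleftrightarrow> (\<forall>k. _ \<longrightarrow> ?same_invariants k)")
proof
  assume ?congruent
  then obtain A :: "real^3^3" where "det A \<noteq> 0" "\<forall>k\<in>I. r k = A *v rb k"
    using invertible_det_nz by blast
  then show "\<forall>k. k - 1 \<in> I \<and> k \<in> I \<and> k + 1 \<in> I \<and> k + 2 \<in> I \<longrightarrow> ?same_invariants k"
    by (simp add: ca_invariants_matrix_image)
next
  assume same: "\<forall>k. k - 1 \<in> I \<and> k \<in> I \<and> k + 1 \<in> I \<and> k + 2 \<in> I \<longrightarrow> ?same_invariants k"
  have I: "int_interval I"
    and Dval_r: "\<And>k. k - 1 \<in> I \<Longrightarrow> k + 1 \<in> I \<Longrightarrow> Dval r k \<noteq> 0"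
    and Dval_rb: "\<And>k. k - 1 \<in> I \<Longrightarrow> k + 1 \<in> I \<Longrightarrow> Dval rb k \<noteq> 0"
    using assms int_intervalD[of I "k - 1" "k + 1" k for k]
    unfolding discrete_centroaffine_curve_def by auto
  obtain k0 where k0: "k0 - 1 \<in> I" "k0 + 1 \<in> I"
    using assms(1) unfolding discrete_centroaffine_curve_def by blast
  obtain A :: "real^3^3" where "invertible A"
    and init: "r (k0 - 1) = A *v rb (k0 - 1)" "r k0 = A *v rb k0" "r (k0 + 1) = A *v rb (k0 + 1)"
    using exists_invertible_matrix_mapping_frame Dval_r[OF k0] Dval_rb[OF k0]
    unfolding Dval_def by metis
  have "r k = A *v rb k" if "k \<in> I" for k
  proof (rule int_interval_three_term_induct[OF I k0 init _ that])
    fix j assume "j - 1 \<in> I" "j + 2 \<in> I"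
    then have "j \<in> I" "j + 1 \<in> I"
      by (auto intro: int_intervalD[OF I \<open>j - 1 \<in> I\<close> \<open>j + 2 \<in> I\<close>])
    show "r j = A *v rb j \<Longrightarrow> r (j + 1) = A *v rb (j + 1) \<Longrightarrow>
        r (j - 1) = A *v rb (j - 1) \<longleftrightarrow> r (j + 2) = A *v rb (j + 2)"
      by (rule matrix_image_extends_along_recurrence)
        (use Dval_r Dval_rb same \<open>j - 1 \<in> I\<close> \<open>j \<in> I\<close> \<open>j + 1 \<in> I\<close> \<open>j + 2 \<in> I\<close>
          in \<open>auto simp: add.assoc\<close>)
  qed
  with \<open>invertible A\<close> show ?congruent
    by blast
qed

end
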